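(* Let $\phi_*\in(0,\pi/2)$, $R\ge33.2r$, and consider the billiard map on $Q(\phi_*,R)$. For $x\in M_r$ with $n_1\ge2$, letting $\tau_0=|p(x_0)p(x_1)|$ and $\tau_1=|p(F^{n_1}x_1)p(x_2)|$, one has $$\tau_0<\tfrac23 d_0+\tfrac23 d_1\quad\text{and}\quad\tau_1<\tfrac23 d_1+\tfrac23 d_2.$$
   Context: Setting: $r=1$, $Q(\phi_*,R)=D(O_r,r)\cap D(O_R,R)$ with $|O_rO_R|=\sqrt{R^2-r^2\sin^2\phi_*}-r\cos\phi_*$; boundary arcs $\Gamma_r\subset\partial D(O_r,r)$ (position angles $[\phi_*,2\pi-\phi_*]$) and $\Gamma_R\subset\partial D(O_R,R)$. Phase space $M=M_r\sqcup M_R$, coordinates $(\phi,\theta)$ with $\theta\in(0,\pi)$ the angle from the positive tangent direction; $p(x)$ the base point; $F$ the billiard map. $M_r^{out}=M_r\cap F^{-1}(M_R)$, $M_R^{out}=M_R\cap F^{-1}(M_r)$. For $x\in M_r$: $x_0=F^{n_0}x$ with $n_0=\inf\{n\ge0:F^nx\in M_r^{out}\}$, $x_1=Fx_0$, $n_1=\inf\{n\ge0:F^nx_1\in M_R^{out}\}$, $x_2=F^{n_1+1}x_1$; $d_0=r\sin\theta(x_0)$, $d_1=R\sin\theta(x_1)$, $d_2=r\sin\theta(x_2)$. *)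

theory Defs
  imports Complex_Main
begin

text \<open>Billiard table Q(phs,R) = D(O_r,1) \<inter> D(O_R,R) in the complex plane, with r = 1,
  O_r = 0 and O_R = -|O_r O_R| on the real axis.  The arc Gamma_r consists of the points
  cis phi with phs \<le> phi \<le> 2 pi - phs; the arc Gamma_R consists of the points
  O_R + R cis psi with |psi| \<le> arcsin (sin phs / R) (angle around O_R).\<close>

datatype comp = Cr | CR

text \<open>A phase point is (component, position angle phi, angle theta from the positive
  (counterclockwise) tangent direction).\<close>
type_synonym phase = "comp \<times> real \<times> real"

definition centre_dist :: "real \<Rightarrow> real \<Rightarrow> real" where
  "centre_dist phs R = sqrt (R\<^sup>2 - (sin phs)\<^sup>2) - cos phs"

definition O_R :: "real \<Rightarrow> real \<Rightarrow> complex" where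
  "O_R phs R = - complex_of_real (centre_dist phs R)"

definition psi_star :: "real \<Rightarrow> real \<Rightarrow> real" where
  "psi_star phs R = arcsin (sin phs / R)"

definition phi_of :: "phase \<Rightarrow> real" where "phi_of x = fst (snd x)"
definition theta_of :: "phase \<Rightarrow> real" where "theta_of x = snd (snd x)"

definition valid_phase :: "real \<Rightarrow> real \<Rightarrow> phase \<Rightarrow> bool" where
  "valid_phase phs R x \<longleftrightarrow> 0 < theta_of x \<and> theta_of x < pi \<and>
     (fst x = Cr \<longrightarrow> phs \<le> phi_of x \<and> phi_of x \<le> 2 * pi - phs) \<and>
     (fst x = CR \<longrightarrow> - psi_star phs R \<le> phi_of x \<and> phi_of x \<le> psi_star phs R)"

definition non_corner :: "real \<Rightarrow> real \<Rightarrow> phase \<Rightarrow> bool" where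
  "non_corner phs R x \<longleftrightarrow>
     (fst x = Cr \<longrightarrow> phs < phi_of x \<and> phi_of x < 2 * pi - phs) \<and>
     (fst x = CR \<longrightarrow> - psi_star phs R < phi_of x \<and> phi_of x < psi_star phs R)"

definition Mr :: "real \<Rightarrow> real \<Rightarrow> phase set" where
  "Mr phs R = {x. valid_phase phs R x \<and> fst x = Cr}"

definition MR :: "real \<Rightarrow> real \<Rightarrow> phase set" where
  "MR phs R = {x. valid_phase phs R x \<and> fst x = CR}"

definition pos :: "real \<Rightarrow> real \<Rightarrow> phase \<Rightarrow> complex" where
  "pos phs R x = (case fst x of
      Cr \<Rightarrow> cis (phi_of x)
    | CR \<Rightarrow> O_R phs R + complex_of_real R * cis (phi_of x))"

definition tangent :: "phase \<Rightarrow> complex" where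
  "tangent x = \<i> * cis (phi_of x)"

definition vel :: "phase \<Rightarrow> complex" where
  "vel x = cis (theta_of x) * tangent x"

text \<open>One billiard step x \<mapsto> y: y is the next collision with the boundary along the ray
  from p(x) in direction vel x, at a non-corner point, and the outgoing velocity is the
  reflection of the incoming velocity in the tangent line at p(y).\<close>
definition bstep :: "real \<Rightarrow> real \<Rightarrow> phase \<Rightarrow> phase \<Rightarrow> bool" where
  "bstep phs R x y \<longleftrightarrow> valid_phase phs R x \<and> valid_phase phs R y \<and> non_corner phs R y \<and>
     (\<exists>t>0. pos phs R y = pos phs R x + complex_of_real t * vel x) \<and>
     vel y = (tangent y)\<^sup>2 * cnj (vel x)"

text \<open>The billiard map F (meaningful where bstep holds).\<close>
definition bmap :: "real \<Rightarrow> real \<Rightarrow> phase \<Rightarrow> phase" where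
  "bmap phs R x = (THE y. bstep phs R x y)"

definition Mr_out :: "real \<Rightarrow> real \<Rightarrow> phase set" where
  "Mr_out phs R = {x \<in> Mr phs R. bmap phs R x \<in> MR phs R}"

definition MR_out :: "real \<Rightarrow> real \<Rightarrow> phase set" where
  "MR_out phs R = {x \<in> MR phs R. bmap phs R x \<in> Mr phs R}"

end

theory Submission
  imports Defs
begin

text \<open>The two estimates are exchanged by time reversal, which replaces the angle \<theta> by pi - \<theta>;
  so it suffices to bound a chord of length \<tau> from a point Q0 of Gamma_r to the point
  Q1 = O_R + R cis \<psi> of Gamma_R, followed by at least two more collisions with Gamma_R.
  Along Gamma_R the billiard keeps \<theta> and advances the position angle by 2\<theta>, so these
  collisions force \<psi> + 4\<theta> \<le> \<psi>* (after a reflection in the real axis when \<theta> > pi/2).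
  Since Q0 lies on the unit circle and in D(O_R,R), the chord cannot lie in the open unit disc,
  which forces \<psi>* \<le> 2\<theta> - \<psi>.  These angle bounds give S = sin (\<theta> - \<psi>) \<approx> sin phs / R.
  By Pythagoras on the chord, d0 = \<tau> - \<langle>Q1, direction\<rangle>, and the claim
  \<tau> < 2/3 (d0 + R sin \<theta>) becomes \<tau> < 2 |O_r O_R| S, which in turn reduces to
  R cos \<psi> - R cos \<psi>* < 2 S (2 |O_r O_R| S - R sin \<theta>).  The left side is at most
  R - R cos \<psi>* \<approx> (sin phs)^2 / (2R), and for R \<ge> 33.2 the error terms fit.\<close>

lemma sin_three_halves_le:
  assumes "0 \<le> u" "u \<le> pi/2"
  shows "sin (3 * u / 2) \<le> 2 * sin u"
proof -
  have "sin (3 * u / 2) = sin u * cos (u/2) + cos u * sin (u/2)"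
    using sin_add[of u "u/2"] by (simp add: field_simps)
  moreover have "sin u * cos (u/2) \<le> sin u"
    using assms by (intro mult_left_le) (auto intro: sin_ge_zero)
  moreover have "cos u * sin (u/2) \<le> sin (u/2)"
    using assms by (intro mult_left_le_one_le) (auto intro!: sin_ge_zero cos_ge_zero)
  moreover have "sin (u/2) \<le> sin u"
    using assms by (subst sin_mono_le_eq) auto
  ultimately show ?thesis by linarith
qed

lemma cis_eq_imp_eq:
  assumes "cis a = cis b" and "\<bar>a - b\<bar> < 2*pi"
  shows "a = b"
proof -
  have "sin a = sin b \<and> cos a = cos b"
    using arg_cong[OF assms(1), of Re] arg_cong[OF assms(1), of Im] by simp
  then obtain n :: int where n: "a = b + 2*pi*n" using sin_cos_eq_iff by blast
  have "\<bar>real_of_int n\<bar> < 1"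
    using assms(2) pi_gt_zero by (simp add: n abs_mult)
  then have "n = 0" by linarith
  then show ?thesis using n by simp
qed

lemma cis_add_double:
  "cis (a + 2*t) = cis a + complex_of_real (2 * sin t) * (\<i> * cis (a + t))"
proof -
  have "cos (2*t) = 1 - 2 * (sin t)\<^sup>2" "sin (2*t) = 2 * sin t * cos t"
    by (simp_all add: cos_double_sin sin_double)
  then show ?thesis
    by (simp add: complex_eq_iff cos_add sin_add power2_eq_square algebra_simps)
      (metis distrib_left mult.right_neutral)
qed

lemma Re_cis_cnj_i_cis: "Re (cis a * cnj (\<i> * cis b)) = sin (a - b)"
  by (simp add: sin_diff algebra_simps)

lemma norm_add_mult_unit_square:
  assumes "cmod w = 1"
  shows "(cmod (z + complex_of_real t * w))\<^sup>2 = (cmod z)\<^sup>2 + 2 * t * Re (z * cnj w) + t\<^sup>2"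
proof -
  have "(Re w)\<^sup>2 + (Im w)\<^sup>2 = 1" using assms cmod_power2[of w] by simp
  then show ?thesis
    unfolding cmod_power2 by (simp add: power2_eq_square algebra_simps) algebra
qed

section \<open>Collisions with a circular arc\<close>

lemma pos_Cr: "fst x = Cr \<Longrightarrow> pos phs R x = cis (phi_of x)"
  by (simp add: pos_def)

lemma pos_CR:
  "fst x = CR \<Longrightarrow> pos phs R x = - complex_of_real (centre_dist phs R) + complex_of_real R * cis (phi_of x)"
  by (simp add: pos_def O_R_def)

lemma vel_eq: "vel x = \<i> * cis (phi_of x + theta_of x)"
  by (simp add: vel_def tangent_def cis_mult algebra_simps)

lemma norm_vel [simp]: "cmod (vel x) = 1"
  by (simp add: vel_eq norm_mult)

lemma bstep_valid:
  assumes "bstep phs R x y"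
  shows "valid_phase phs R x" "valid_phase phs R y" "non_corner phs R y"
  using assms by (simp_all add: bstep_def)

lemma bstep_incoming_vel:
  assumes "bstep phs R x y"
  shows "vel x = \<i> * cis (phi_of y - theta_of y)"
proof -
  have refl: "vel y = (tangent y)\<^sup>2 * cnj (vel x)"
    using assms by (simp add: bstep_def)
  have unit: "tangent y * cnj (tangent y) = 1"
    using complex_norm_square[of "tangent y"] by (simp add: tangent_def norm_mult)
  have "(tangent y)\<^sup>2 * cnj (vel y) = (tangent y * cnj (tangent y))\<^sup>2 * vel x"
    using refl by (simp add: power2_eq_square algebra_simps)
  then have "vel x = (tangent y)\<^sup>2 * cnj (vel y)"
    using unit by simp
  also have "(tangent y)\<^sup>2 = - cis (2 * phi_of y)"
    by (simp add: tangent_def power2_eq_square mult.commute mult.left_commute cis_mult)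
  also have "- cis (2 * phi_of y) * cnj (vel y) = \<i> * cis (phi_of y - theta_of y)"
    by (simp add: vel_eq cis_cnj mult.commute mult.left_commute cis_mult)
  finally show ?thesis .
qed

lemma bstep_Gamma_R:
  assumes "0 < R" and step: "bstep phs R u v" and "fst u = CR" "fst v = CR"
  shows "cis (phi_of v) = cis (phi_of u + 2 * theta_of u) \<and> theta_of v = theta_of u"
proof -
  obtain t where "0 < t" and chord: "pos phs R v = pos phs R u + complex_of_real t * vel u"
    using step by (auto simp: bstep_def)
  define l where "l = t / R"
  have l: "0 < l" using \<open>0 < t\<close> \<open>0 < R\<close> by (simp add: l_def)
  have arc: "cis (phi_of v) = cis (phi_of u) + complex_of_real l * vel u"
    using chord \<open>0 < R\<close> assms(3,4) by (simp add: pos_CR l_def field_simps)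
  have "1 = (cmod (cis (phi_of u) + complex_of_real l * vel u))\<^sup>2"
    by (simp flip: arc)
  also have "\<dots> = 1 + 2 * l * Re (cis (phi_of u) * cnj (vel u)) + l\<^sup>2"
    by (simp add: norm_add_mult_unit_square)
  also have "Re (cis (phi_of u) * cnj (vel u)) = - sin (theta_of u)"
    unfolding vel_eq Re_cis_cnj_i_cis by simp
  finally have "l = 2 * sin (theta_of u)"
    using l by (simp add: power2_eq_square algebra_simps)
  then have pos_v: "cis (phi_of v) = cis (phi_of u + 2 * theta_of u)"
    using arc by (simp add: cis_add_double vel_eq)
  have "cis (phi_of v - theta_of v) = cis (phi_of u + theta_of u)"
    using bstep_incoming_vel[OF step] by (simp add: vel_eq)
  moreover have "cis (theta_of v) = cis (phi_of v) / cis (phi_of v - theta_of v)"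
    by (simp add: cis_divide)
  ultimately have "cis (theta_of v) = cis (phi_of u + 2 * theta_of u) / cis (phi_of u + theta_of u)"
    using pos_v by simp
  also have "\<dots> = cis (theta_of u)"
    by (simp add: cis_divide)
  moreover have "0 < theta_of u" "theta_of u < pi" "0 < theta_of v" "theta_of v < pi"
    using bstep_valid[OF step] by (auto simp: valid_phase_def)
  ultimately have "theta_of v = theta_of u"
    by (intro cis_eq_imp_eq) auto
  with pos_v show ?thesis by simp
qed

text \<open>For \<theta> > pi/2 the orbit runs clockwise, by 2 (pi - \<theta>) per collision.\<close>

lemma two_bounces_orientation:
  fixes p \<theta> \<psi>0 \<psi>1 \<psi>2 :: real
  assumes "p < pi / 2" "\<bar>\<psi>0\<bar> \<le> p" "\<bar>\<psi>1\<bar> \<le> p" "\<bar>\<psi>2\<bar> \<le> p" "0 < \<theta>" "\<theta> < pi"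
    and "cis \<psi>1 = cis (\<psi>0 + 2 * \<theta>)" "cis \<psi>2 = cis (\<psi>1 + 2 * \<theta>)"
  shows "if \<theta> \<le> pi / 2 then \<psi>0 + 4 * \<theta> \<le> p else - p \<le> \<psi>0 - 4 * (pi - \<theta>)"
proof (cases "\<theta> \<le> pi / 2")
  case True
  have "\<psi>1 = \<psi>0 + 2 * \<theta>" "\<psi>2 = \<psi>1 + 2 * \<theta>"
    using assms True by (auto intro!: cis_eq_imp_eq)
  then show ?thesis
    using True assms(4) by simp
next
  case False
  have backwards: "cis (a + 2 * \<theta>) = cis (a - 2 * (pi - \<theta>))" for a
  proof -
    have "cis (a + 2 * \<theta>) = cis (a - 2 * (pi - \<theta>) + 2 * pi)"
      by (simp add: algebra_simps)
    then show ?thesis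
      unfolding cis_mult[symmetric] cis_2pi by simp
  qed
  have "\<psi>1 = \<psi>0 - 2 * (pi - \<theta>)" "\<psi>2 = \<psi>1 - 2 * (pi - \<theta>)"
    using assms False by (auto simp: backwards intro!: cis_eq_imp_eq)
  then show ?thesis
    using False assms(4) by simp
qed

lemma run_on_Gamma_R:
  assumes orbit: "\<And>k. xs (Suc k) = bmap phs R (xs k)"
    and steps: "\<And>j. j < n \<Longrightarrow> bstep phs R (xs (m + j)) (xs (m + Suc j))"
    and start: "fst (xs m) = CR"
    and stay: "\<And>j. j < n \<Longrightarrow> xs (m + j) \<notin> MR_out phs R"
  shows "j \<le> n \<Longrightarrow> fst (xs (m + j)) = CR"
proof (induction j)
  case 0
  then show ?case using start by simp
next
  case (Suc j)
  then have "j < n" by simp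
  have "xs (m + j) \<in> MR phs R"
    using Suc.IH \<open>j < n\<close> bstep_valid(1)[OF steps] by (simp add: MR_def)
  then have "xs (m + Suc j) \<notin> Mr phs R"
    using stay[OF \<open>j < n\<close>] orbit[of "m + j"] by (simp add: MR_out_def)
  then show ?case
    using bstep_valid(2)[OF steps[OF \<open>j < n\<close>]] by (cases "fst (xs (m + Suc j))") (auto simp: Mr_def)
qed

lemma theta_constant_on_run:
  assumes "0 < R"
    and steps: "\<And>j. j < n \<Longrightarrow> bstep phs R (xs (m + j)) (xs (m + Suc j))"
    and on_Gamma_R: "\<And>j. j \<le> n \<Longrightarrow> fst (xs (m + j)) = CR"
  shows "j \<le> n \<Longrightarrow> theta_of (xs (m + j)) = theta_of (xs m)"
proof (induction j)
  case (Suc j)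
  then show ?case
    using bstep_Gamma_R[OF assms(1) steps on_Gamma_R on_Gamma_R] by simp
qed simp

lemma chord_length_le:
  fixes c R t \<theta> \<psi> :: real
  assumes "cmod (Q0 + complex_of_real c) \<le> R" "0 < t"
    and chord: "- complex_of_real c + complex_of_real R * cis \<psi> = Q0 + complex_of_real t * (\<i> * cis (\<psi> - \<theta>))"
  shows "t \<le> 2 * R * sin \<theta>"
proof -
  define w where "w = \<i> * cis (\<psi> - \<theta>)"
  have w: "cmod w = 1" by (simp add: w_def norm_mult)
  have "Re (complex_of_real R * cis \<psi> * cnj w) = R * Re (cis \<psi> * cnj w)"
    by (simp add: mult.assoc)
  also have "Re (cis \<psi> * cnj w) = sin \<theta>"
    unfolding w_def Re_cis_cnj_i_cis by simp
  finally have "(cmod (complex_of_real R * cis \<psi> + complex_of_real (- t) * w))\<^sup>2 = R\<^sup>2 - 2 * t * R * sin \<theta> + t\<^sup>2"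
    unfolding norm_add_mult_unit_square[OF w] by (simp add: norm_mult)
  moreover have "complex_of_real R * cis \<psi> + complex_of_real (- t) * w = Q0 + complex_of_real c"
    using chord by (simp add: w_def algebra_simps)
  moreover have "(cmod (Q0 + complex_of_real c))\<^sup>2 \<le> R\<^sup>2"
    using assms(1) by (simp add: power_mono)
  ultimately have "t * t \<le> t * (2 * R * sin \<theta>)"
    by (simp add: power2_eq_square algebra_simps)
  then show ?thesis
    using assms(2) by simp
qed

section \<open>Time reversal\<close>

definition time_reverse :: "phase \<Rightarrow> phase" where
  "time_reverse x = (fst x, phi_of x, pi - theta_of x)"

lemma time_reverse_simps [simp]:
  "fst (time_reverse x) = fst x" "phi_of (time_reverse x) = phi_of x" "theta_of (time_reverse x) = pi - theta_of x"
  by (simp_all add: time_reverse_def phi_of_def theta_of_def)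

lemma pos_time_reverse [simp]: "pos phs R (time_reverse x) = pos phs R x"
  by (simp add: pos_def split: comp.split)

lemma vel_time_reverse: "vel (time_reverse x) = - (\<i> * cis (phi_of x - theta_of x))"
  by (simp add: vel_eq complex_eq_iff cos_diff sin_diff cos_add sin_add)

lemma valid_phase_time_reverse [simp]: "valid_phase phs R (time_reverse x) = valid_phase phs R x"
  by (auto simp: valid_phase_def)

lemma non_corner_time_reverse [simp]: "non_corner phs R (time_reverse x) = non_corner phs R x"
  by (simp add: non_corner_def)

lemma bstep_time_reverse:
  assumes step: "bstep phs R x y" and "non_corner phs R x"
  shows "bstep phs R (time_reverse y) (time_reverse x)"
proof -
  obtain t where "0 < t" and chord: "pos phs R y = pos phs R x + complex_of_real t * vel x"
    using step by (auto simp: bstep_def)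
  have vel_back: "vel (time_reverse y) = - vel x"
    by (simp add: vel_time_reverse bstep_incoming_vel[OF step])
  have "pos phs R (time_reverse x) = pos phs R (time_reverse y) + complex_of_real t * vel (time_reverse y)"
    using chord vel_back by simp
  moreover have "vel (time_reverse x) = (tangent (time_reverse x))\<^sup>2 * cnj (- vel x)"
    unfolding vel_time_reverse by (simp add: vel_eq tangent_def cis_cnj power2_eq_square
        mult.commute mult.left_commute cis_mult)
  ultimately show ?thesis
    using step assms(2) \<open>0 < t\<close> vel_back by (auto simp: bstep_def)
qed

section \<open>The table Q(phs, R)\<close>

locale billiard_table =
  fixes phs R :: real
  assumes phs_pos: "0 < phs" and phs_lt: "phs < pi / 2" and R_ge: "33.2 \<le> R"
begin

abbreviation c where "c \<equiv> centre_dist phs R"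
abbreviation ps where "ps \<equiv> psi_star phs R"

lemma R_pos: "0 < R"
  using R_ge by simp

lemma sin_phs_pos: "0 < sin phs"
  using phs_pos phs_lt by (intro sin_gt_zero) auto

lemma cos_phs_nonneg: "0 \<le> cos phs"
  using phs_pos phs_lt by (intro cos_ge_zero) auto

lemma sin_phs_div_R: "0 < sin phs / R" "sin phs / R \<le> 1/2"
proof -
  have "2 * sin phs \<le> R"
    using sin_le_one[of phs] R_ge by linarith
  then show "0 < sin phs / R" "sin phs / R \<le> 1/2"
    using sin_phs_pos R_pos by (simp_all add: pos_divide_le_eq)
qed

lemma sqrt_R_sq_minus_sin_sq: "sqrt (R\<^sup>2 - (sin phs)\<^sup>2) = c + cos phs"
  by (simp add: centre_dist_def)

lemma sin_phs_sq_le: "(sin phs)\<^sup>2 \<le> R\<^sup>2"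
proof -
  have "sin phs \<le> R"
    using sin_le_one[of phs] R_ge by linarith
  then show ?thesis
    using sin_phs_pos by (intro power_mono) auto
qed

text \<open>The corner cis phs lies on both circles.\<close>

lemma R_sq_eq: "R\<^sup>2 = c\<^sup>2 + 2 * c * cos phs + 1"
proof -
  have "(c + cos phs)\<^sup>2 = R\<^sup>2 - (sin phs)\<^sup>2"
    using sin_phs_sq_le by (simp flip: sqrt_R_sq_minus_sin_sq)
  then show ?thesis
    by (simp add: power2_eq_square algebra_simps) (use sin_cos_squared_add3[of phs] in linarith)
qed

lemma R_minus_one_le: "R - 1 \<le> c + cos phs"
proof -
  have "(sin phs)\<^sup>2 \<le> 1"
    using sin_le_one[of phs] sin_phs_pos by (simp add: power_le_one)
  then have "(R - 1)\<^sup>2 \<le> R\<^sup>2 - (sin phs)\<^sup>2"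
    using R_ge by (simp add: power2_eq_square algebra_simps)
  then show ?thesis
    unfolding sqrt_R_sq_minus_sin_sq[symmetric] by (rule real_le_rsqrt)
qed

lemma centre_dist_pos: "0 < c"
  using R_minus_one_le R_ge cos_le_one[of phs] by linarith

lemma sin_psi_star: "sin ps = sin phs / R"
  unfolding psi_star_def using sin_phs_div_R by (intro sin_arcsin) linarith+

lemma cos_psi_star: "R * cos ps = c + cos phs"
proof -
  have "cos ps = sqrt (1 - (sin phs / R)\<^sup>2)"
    unfolding psi_star_def using sin_phs_div_R by (intro cos_arcsin) linarith+
  also have "\<dots> = sqrt (R\<^sup>2 - (sin phs)\<^sup>2) / R"
    using R_pos by (simp add: power_divide field_simps real_sqrt_divide)
  finally show ?thesis
    using R_pos by (simp add: sqrt_R_sq_minus_sin_sq)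
qed

lemma psi_star_pos: "0 < ps"
proof -
  have "arcsin 0 < arcsin (sin phs / R)"
    using sin_phs_div_R by (intro arcsin_less_arcsin) linarith+
  then show ?thesis by (simp add: psi_star_def)
qed

lemma psi_star_le: "ps \<le> pi / 6"
proof -
  have "ps \<le> arcsin (1/2)"
    using sin_phs_div_R arcsin_le_arcsin[of "sin phs / R" "1/2"] by (simp add: psi_star_def)
  also have "arcsin (1/2) = pi / 6"
    using arcsin_sin[of "pi/6"] pi_gt_zero by (simp add: sin_30)
  finally show ?thesis .
qed

lemma Gamma_r_in_disc_R:
  assumes "phs \<le> f" "f \<le> 2 * pi - phs"
  shows "cmod (cis f + complex_of_real c) \<le> R"
proof -
  have cos_f: "cos f \<le> cos phs"
  proof (cases "f \<le> pi")
    case True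
    then show ?thesis using assms phs_pos by (subst cos_mono_le_eq) auto
  next
    case False
    then have "cos (2 * pi - f) \<le> cos phs"
      using assms phs_pos by (subst cos_mono_le_eq) auto
    then show ?thesis by simp
  qed
  have "(cmod (cis f + complex_of_real c))\<^sup>2 = 1 + 2 * c * cos f + c\<^sup>2"
    unfolding cmod_power2 by (simp add: power2_eq_square algebra_simps)
  also have "\<dots> \<le> R\<^sup>2"
    using cos_f centre_dist_pos R_sq_eq by (simp add: mult_left_mono)
  finally show ?thesis
    using R_pos by (simp add: power2_le_iff_abs_le)
qed

lemma norm_Gamma_R_sq:
  "(cmod (- complex_of_real c + complex_of_real R * cis f))\<^sup>2 = 1 + 2 * c * (c + cos phs - R * cos f)"
proof -
  have "(cmod (- complex_of_real c + complex_of_real R * cis f))\<^sup>2 = c\<^sup>2 - 2 * R * c * cos f + R\<^sup>2"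
    using norm_add_mult_unit_square[of "cis f" "- complex_of_real c" R] by simp
  then show ?thesis
    using R_sq_eq by (simp add: algebra_simps power2_eq_square)
qed

lemma Gamma_R_in_unit_disc:
  assumes "\<bar>f\<bar> \<le> ps"
  shows "cmod (- complex_of_real c + complex_of_real R * cis f) \<le> 1"
proof -
  have "cos ps \<le> cos \<bar>f\<bar>"
    using assms psi_star_le pi_gt_zero by (subst cos_mono_le_eq) auto
  then have "c + cos phs \<le> R * cos f"
    using R_pos by (simp flip: cos_psi_star)
  then have "(cmod (- complex_of_real c + complex_of_real R * cis f))\<^sup>2 \<le> 1"
    unfolding norm_Gamma_R_sq using centre_dist_pos by (simp add: mult_nonneg_nonpos)
  then show ?thesis
    by (simp add: power_le_one_iff)
qed

lemma Gamma_R_in_open_unit_disc: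
  assumes "\<bar>f\<bar> < ps"
  shows "cmod (- complex_of_real c + complex_of_real R * cis f) < 1"
proof -
  have "cos ps < cos \<bar>f\<bar>"
    using assms psi_star_le pi_gt_zero by (subst cos_mono_less_eq) auto
  then have "c + cos phs < R * cos f"
    using R_pos by (simp flip: cos_psi_star)
  then have "(cmod (- complex_of_real c + complex_of_real R * cis f))\<^sup>2 < 1"
    unfolding norm_Gamma_R_sq using centre_dist_pos by (simp add: mult_pos_neg)
  then show ?thesis
    by (simp add: power_less_one_iff)
qed

section \<open>The chord estimate\<close>

lemma sin_bounds_near_psi_star:
  assumes "2 * ps / 3 \<le> a" "a \<le> 3 * ps / 2"
  shows "sin phs / (2 * R) \<le> sin a" "sin a \<le> 2 * sin phs / R"
proof -
  have "sin phs / R = sin (3 * (2 * ps / 3) / 2)"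
    by (simp add: sin_psi_star)
  also have "\<dots> \<le> 2 * sin (2 * ps / 3)"
    using psi_star_pos psi_star_le pi_gt_zero by (intro sin_three_halves_le) auto
  also have "sin (2 * ps / 3) \<le> sin a"
    using assms psi_star_pos psi_star_le pi_gt_zero by (subst sin_mono_le_eq) auto
  finally show "sin phs / (2 * R) \<le> sin a"
    by (simp add: field_simps)
  have "sin a \<le> sin (3 * ps / 2)"
    using assms psi_star_pos psi_star_le pi_gt_zero by (subst sin_mono_le_eq) auto
  also have "\<dots> \<le> 2 * sin ps"
    using psi_star_pos psi_star_le pi_gt_zero by (intro sin_three_halves_le) auto
  finally show "sin a \<le> 2 * sin phs / R"
    by (simp add: sin_psi_star)
qed

lemma chord_gap_lower_bound:
  assumes "- ps \<le> \<psi>" "\<psi> + 4 * \<theta> \<le> ps" "ps \<le> 2 * \<theta> - \<psi>" "0 < \<theta>"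
  shows "sin phs * (1 - 4 / R - 8 / R\<^sup>2) \<le> 2 * c * sin (\<theta> - \<psi>) - R * sin \<theta>"
proof -
  define a where "a = \<theta> - \<psi>"
  define S where "S = sin a"
  have a_bounds: "2 * ps / 3 \<le> a" "a \<le> 3 * ps / 2"
    using assms unfolding a_def by linarith+
  have "\<theta> \<le> 2 * a - ps"
    using assms unfolding a_def by (smt (verit))
  note S_bounds = sin_bounds_near_psi_star[OF a_bounds, folded S_def]
  have S_pos: "0 \<le> S"
    using S_bounds(1) sin_phs_pos R_pos divide_pos_pos[of "sin phs" "2 * R"] by linarith
  have "sin \<theta> \<le> sin (2 * a - ps)"
    using a_bounds \<open>\<theta> \<le> 2 * a - ps\<close> assms(4) psi_star_pos psi_star_le pi_gt_zero by (subst sin_mono_le_eq) auto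
  then have "R * sin \<theta> \<le> R * sin (2 * a - ps)"
    using R_pos by simp
  also have "\<dots> = 2 * S * cos a * (R * cos ps) - (1 - 2 * S\<^sup>2) * (R * sin ps)"
    unfolding sin_diff sin_double cos_double_sin S_def by (simp add: algebra_simps)
  also have "\<dots> = 2 * S * cos a * (c + cos phs) - (1 - 2 * S\<^sup>2) * sin phs"
    using R_pos by (simp add: cos_psi_star sin_psi_star)
  also have "2 * S * cos a * (c + cos phs) \<le> 2 * S * (c + cos phs)"
  proof -
    have "cos a * (c + cos phs) \<le> c + cos phs"
      using mult_right_mono[OF cos_le_one[of a], of "c + cos phs"] centre_dist_pos cos_phs_nonneg
      by simp
    then show ?thesis
      using S_pos mult_left_mono[of _ _ "2 * S"] by (simp add: mult.assoc)
  qed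
  finally have "sin phs - 2 * S * cos phs - 2 * S\<^sup>2 * sin phs \<le> 2 * c * S - R * sin \<theta>"
    by (simp add: algebra_simps)
  moreover have "2 * S * cos phs \<le> 4 * sin phs / R"
    using S_bounds S_pos mult_left_le[of "cos phs" S] cos_phs_nonneg by simp
  moreover have "2 * S\<^sup>2 * sin phs \<le> 8 * sin phs / R\<^sup>2"
  proof -
    have "S\<^sup>2 \<le> (2 * sin phs / R)\<^sup>2"
      using S_bounds S_pos by (intro power_mono) auto
    also have "\<dots> \<le> 4 / R\<^sup>2"
      using sin_phs_pos sin_le_one[of phs] by (simp add: power_divide power_le_one divide_right_mono)
    finally show ?thesis
      using sin_phs_pos mult_right_mono[of "S\<^sup>2" "4 / R\<^sup>2" "sin phs"] by simp
  qed
  moreover have "sin phs * (1 - 4 / R - 8 / R\<^sup>2) = sin phs - 4 * sin phs / R - 8 * sin phs / R\<^sup>2"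
    by (simp add: algebra_simps)
  ultimately show ?thesis
    unfolding S_def a_def by (smt (verit))
qed

lemma R_div_2R_minus_1_lt: "R / (2 * R - 1) < 1 - 4 / R - 8 / R\<^sup>2"
proof -
  have "33.2 * (R * R) \<le> R * R * R" "33.2 * R \<le> R * R"
    using R_ge R_pos by simp_all
  moreover have "(2 * R - 1) * (R * R - 4 * R - 8) = 2 * (R * R * R) - 9 * (R * R) - 12 * R + 8"
    by (simp add: algebra_simps)
  ultimately have "R * R * R < (2 * R - 1) * (R * R - 4 * R - 8)"
    using R_ge by linarith
  then have "R * R * R / ((2 * R - 1) * (R * R)) < (2 * R - 1) * (R * R - 4 * R - 8) / ((2 * R - 1) * (R * R))"
    using R_ge by (intro divide_strict_right_mono) auto
  moreover have "R * R * R / ((2 * R - 1) * (R * R)) = R / (2 * R - 1)"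
    using R_ge by (simp add: field_simps)
  moreover have "(2 * R - 1) * (R * R - 4 * R - 8) / ((2 * R - 1) * (R * R)) = 1 - 4 / R - 8 / R\<^sup>2"
    using R_ge by (simp add: field_simps power2_eq_square)
  ultimately show ?thesis
    by simp
qed

lemma R_minus_R_cos_psi_star_lt:
  "R - R * cos ps < (sin phs)\<^sup>2 * (1 - 4 / R - 8 / R\<^sup>2) / R"
proof -
  have sum_pos: "2 * R - 1 \<le> R + (c + cos phs)"
    using R_minus_one_le by linarith
  have "(R - (c + cos phs)) * (R + (c + cos phs)) = (sin phs)\<^sup>2"
    using R_sq_eq sin_cos_squared_add3[of phs] by (simp add: power2_eq_square algebra_simps)
  then have "R - (c + cos phs) = (sin phs)\<^sup>2 / (R + (c + cos phs))"
    using sum_pos R_ge by (simp add: eq_divide_eq)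
  also have "\<dots> \<le> (sin phs)\<^sup>2 / (2 * R - 1)"
    using sum_pos R_ge by (intro divide_left_mono) auto
  also have "\<dots> = (sin phs)\<^sup>2 * (R / (2 * R - 1)) / R"
    using R_pos by simp
  also have "\<dots> < (sin phs)\<^sup>2 * (1 - 4 / R - 8 / R\<^sup>2) / R"
    using R_div_2R_minus_1_lt sin_phs_pos R_pos by (intro divide_strict_right_mono mult_strict_left_mono) auto
  finally show ?thesis
    by (simp add: cos_psi_star)
qed

lemma chord_angle_estimate:
  assumes "- ps \<le> \<psi>" "\<psi> + 4 * \<theta> \<le> ps" "ps \<le> 2 * \<theta> - \<psi>" "0 < \<theta>"
  shows "0 < sin (\<theta> - \<psi>)" "0 < 2 * c * sin (\<theta> - \<psi>) - R * sin \<theta>"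
    "R * cos \<psi> - (c + cos phs) < 2 * sin (\<theta> - \<psi>) * (2 * c * sin (\<theta> - \<psi>) - R * sin \<theta>)"
proof -
  define S where "S = sin (\<theta> - \<psi>)"
  define gap where "gap = 2 * c * S - R * sin \<theta>"
  define G where "G = 1 - 4 / R - 8 / R\<^sup>2"
  have S_ge: "sin phs / (2 * R) \<le> S"
    unfolding S_def using assms by (intro sin_bounds_near_psi_star) linarith+
  then show S_pos: "0 < sin (\<theta> - \<psi>)"
    using sin_phs_pos R_pos S_def divide_pos_pos[of "sin phs" "2 * R"] by linarith
  have G_pos: "0 < G"
    using R_div_2R_minus_1_lt R_ge divide_pos_pos[of R "2 * R - 1"] unfolding G_def by linarith
  have gap_ge: "sin phs * G \<le> gap"
    unfolding gap_def G_def S_def using chord_gap_lower_bound[OF assms] .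
  then have "0 < gap"
    using G_pos sin_phs_pos mult_pos_pos[of "sin phs" G] by linarith
  then show "0 < 2 * c * sin (\<theta> - \<psi>) - R * sin \<theta>"
    unfolding gap_def S_def .
  have "R * cos \<psi> - (c + cos phs) \<le> R - (c + cos phs)"
    using R_pos by simp
  also have "\<dots> < (sin phs)\<^sup>2 * G / R"
    using R_minus_R_cos_psi_star_lt unfolding G_def cos_psi_star .
  also have "\<dots> = 2 * (sin phs / (2 * R)) * (sin phs * G)"
    using R_pos by (simp add: power2_eq_square)
  also have "\<dots> \<le> 2 * S * gap"
    using S_ge gap_ge sin_phs_pos G_pos R_pos S_pos unfolding S_def[symmetric]
    by (intro mult_left_mono mult_mono) auto
  finally show "R * cos \<psi> - (c + cos phs) < 2 * sin (\<theta> - \<psi>) * (2 * c * sin (\<theta> - \<psi>) - R * sin \<theta>)"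
    unfolding S_def gap_def .
qed

lemma chord_far_side:
  assumes "0 < \<theta>" "\<theta> \<le> pi / 2" "\<bar>\<psi>\<bar> \<le> ps"
    and "cmod Q0 = 1" "cmod (Q0 + complex_of_real c) \<le> R" and "0 < t"
    and chord: "- complex_of_real c + complex_of_real R * cis \<psi> = Q0 + complex_of_real t * (\<i> * cis (\<psi> - \<theta>))"
  shows "ps \<le> 2 * \<theta> - \<psi>"
proof (rule ccontr)
  assume "\<not> ps \<le> 2 * \<theta> - \<psi>"
  define w where "w = \<i> * cis (\<psi> - \<theta>)"
  define Q1 where "Q1 = - complex_of_real c + complex_of_real R * cis \<psi>"
  \<comment> \<open>P is the other end of the chord of the circle around O_R through Q1 in direction w.
    If P were on the open arc Gamma_R, the whole chord, and with it Q0, would lie in the open unit disc.\<close>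
  define P where "P = - complex_of_real c + complex_of_real R * cis (\<psi> - 2 * \<theta>)"
  define l where "l = t / (2 * R * sin \<theta>)"
  have sin_pos: "0 < sin \<theta>"
    using assms(1,2) by (intro sin_gt_zero) auto
  have l: "0 < l" "l \<le> 1"
    using chord_length_le[OF assms(5,6) chord] assms(6) R_pos sin_pos by (auto simp: l_def)
  have "cis \<psi> = cis (\<psi> - 2 * \<theta>) + complex_of_real (2 * sin \<theta>) * w"
    using cis_add_double[of "\<psi> - 2 * \<theta>" \<theta>] by (simp add: w_def)
  then have Q1_P: "Q1 - P = complex_of_real (2 * R * sin \<theta>) * w"
    by (simp add: Q1_def P_def algebra_simps)
  have "t = l * (2 * R * sin \<theta>)"
    using R_pos sin_pos by (simp add: l_def)
  then have "Q0 = Q1 - complex_of_real l * (Q1 - P)"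
    using chord unfolding Q1_P by (simp add: Q1_def w_def)
  then have "Q0 = (1 - l) *\<^sub>R Q1 + l *\<^sub>R P"
    by (simp add: scaleR_conv_of_real algebra_simps)
  then have "cmod Q0 \<le> (1 - l) * cmod Q1 + l * cmod P"
    using l by (metis abs_of_nonneg diff_ge_0_iff_ge less_imp_le norm_scaleR norm_triangle_ineq)
  also have "\<dots> < 1"
  proof -
    have "cmod Q1 \<le> 1"
      unfolding Q1_def using assms(3) by (rule Gamma_R_in_unit_disc)
    moreover have "cmod P < 1"
      unfolding P_def using \<open>\<not> ps \<le> 2 * \<theta> - \<psi>\<close> assms(1,3) by (intro Gamma_R_in_open_unit_disc) auto
    ultimately have "(1 - l) * cmod Q1 \<le> 1 - l" "l * cmod P < l"
      using l by (simp_all add: mult_left_le)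
    then show ?thesis
      by linarith
  qed
  finally show False
    using assms(4) by simp
qed

lemma chord_foot:
  assumes "cmod Q0 = 1"
    and chord: "- complex_of_real c + complex_of_real R * cis \<psi> = Q0 + complex_of_real t * (\<i> * cis (\<psi> - \<theta>))"
  defines "p \<equiv> R * sin \<theta> - c * sin (\<theta> - \<psi>)"
  shows "- Re (Q0 * cnj (\<i> * cis (\<psi> - \<theta>))) = t - p"
    and "(t - p)\<^sup>2 = 2 * c * (R * cos \<psi> - (c + cos phs)) + p\<^sup>2"
proof -
  define w where "w = \<i> * cis (\<psi> - \<theta>)"
  define Q1 where "Q1 = - complex_of_real c + complex_of_real R * cis \<psi>"
  have w: "cmod w = 1" by (simp add: w_def norm_mult)
  have "Re (Q1 * cnj w) = - c * Re (cis 0 * cnj w) + R * Re (cis \<psi> * cnj w)"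
    by (simp add: Q1_def algebra_simps)
  also have "\<dots> = p"
    unfolding w_def Re_cis_cnj_i_cis by (simp add: p_def)
  finally have p_eq: "Re (Q1 * cnj w) = p" .
  have Q0_eq: "Q0 = Q1 + complex_of_real (- t) * w"
    using chord by (simp add: Q1_def w_def)
  have "w * cnj w = 1"
    using complex_norm_square[of w] w by simp
  then have "Q0 * cnj w = Q1 * cnj w - complex_of_real t"
    by (simp add: Q0_eq algebra_simps flip: mult.assoc)
  then have "- Re (Q0 * cnj w) = t - p"
    by (simp flip: p_eq)
  then show "- Re (Q0 * cnj (\<i> * cis (\<psi> - \<theta>))) = t - p"
    unfolding w_def .
  have "1 = (cmod (Q1 + complex_of_real (- t) * w))\<^sup>2"
    using assms(1) Q0_eq by simp
  also have "\<dots> = (cmod Q1)\<^sup>2 + 2 * (- t) * p + (- t)\<^sup>2"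
    unfolding p_eq[symmetric] by (rule norm_add_mult_unit_square[OF w])
  also have "(cmod Q1)\<^sup>2 = 1 + 2 * c * (c + cos phs - R * cos \<psi>)"
    unfolding Q1_def by (rule norm_Gamma_R_sq)
  finally show "(t - p)\<^sup>2 = 2 * c * (R * cos \<psi> - (c + cos phs)) + p\<^sup>2"
    by (simp add: power2_eq_square algebra_simps)
qed

lemma chord_bound_acute:
  assumes "0 < \<theta>" "\<theta> \<le> pi / 2" "- ps \<le> \<psi>" "\<psi> + 4 * \<theta> \<le> ps"
    and "cmod Q0 = 1" "cmod (Q0 + complex_of_real c) \<le> R" and "0 < t"
    and chord: "- complex_of_real c + complex_of_real R * cis \<psi> = Q0 + complex_of_real t * (\<i> * cis (\<psi> - \<theta>))"
  shows "3 * t < 2 * (- Re (Q0 * cnj (\<i> * cis (\<psi> - \<theta>)))) + 2 * R * sin \<theta>"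
proof -
  define S where "S = sin (\<theta> - \<psi>)"
  define p where "p = R * sin \<theta> - c * S"
  have "\<bar>\<psi>\<bar> \<le> ps"
    using assms(1,3,4) by linarith
  then have "ps \<le> 2 * \<theta> - \<psi>"
    using chord_far_side assms by blast
  note estimate = chord_angle_estimate[OF assms(3,4) this assms(1), folded S_def]
  note foot = chord_foot[OF assms(5) chord, folded S_def, folded p_def]
  have "(t - p)\<^sup>2 < 2 * c * (2 * S * (2 * c * S - R * sin \<theta>)) + p\<^sup>2"
    unfolding foot(2) using estimate(3) centre_dist_pos by simp
  also have "\<dots> = (3 * c * S - R * sin \<theta>)\<^sup>2"
    by (simp add: p_def power2_eq_square algebra_simps)
  moreover have "0 < 3 * c * S - R * sin \<theta>"
  proof -
    have "3 * c * S - R * sin \<theta> = c * S + (2 * c * S - R * sin \<theta>)"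
      by (simp add: algebra_simps)
    moreover have "0 < c * S"
      using estimate(1) centre_dist_pos by simp
    ultimately show ?thesis
      using estimate(2) by linarith
  qed
  ultimately have "t - p < 3 * c * S - R * sin \<theta>"
    by (simp add: power_less_imp_less_base)
  \<comment> \<open>i.e. t < 2 c S, which is the claim since the foot distance is t - p\<close>
  then show ?thesis
    unfolding foot(1) by (simp add: p_def mult.commute mult.left_commute)
qed

lemma chord_bound:
  assumes "0 < \<theta>" "\<theta> < pi" "\<bar>\<psi>\<bar> \<le> ps"
    and orientation: "if \<theta> \<le> pi / 2 then \<psi> + 4 * \<theta> \<le> ps else - ps \<le> \<psi> - 4 * (pi - \<theta>)"
    and Q0: "cmod Q0 = 1" "cmod (Q0 + complex_of_real c) \<le> R" and "0 < t"
    and chord: "- complex_of_real c + complex_of_real R * cis \<psi> = Q0 + complex_of_real t * (\<i> * cis (\<psi> - \<theta>))"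
  shows "3 * t < 2 * (- Re (Q0 * cnj (\<i> * cis (\<psi> - \<theta>)))) + 2 * R * sin \<theta>"
proof (cases "\<theta> \<le> pi / 2")
  case True
  then show ?thesis
    using assms chord_bound_acute by (simp add: abs_le_iff)
next
  case False
  \<comment> \<open>reflect in the real axis, which replaces \<psi>, \<theta> by - \<psi>, pi - \<theta>\<close>
  have cnj_dir: "cnj (\<i> * cis (\<psi> - \<theta>)) = \<i> * cis (- \<psi> - (pi - \<theta>))"
    by (simp add: complex_eq_iff cos_diff sin_diff)
  moreover have "cmod (cnj Q0 + complex_of_real c) \<le> R"
    using Q0(2) by (metis complex_cnj_add complex_cnj_complex_of_real complex_mod_cnj)
  moreover have "- complex_of_real c + complex_of_real R * cis (- \<psi>)
      = cnj Q0 + complex_of_real t * cnj (\<i> * cis (\<psi> - \<theta>))"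
    using arg_cong[OF chord, of cnj] by (simp add: cis_cnj)
  ultimately have "3 * t < 2 * (- Re (cnj Q0 * cnj (\<i> * cis (- \<psi> - (pi - \<theta>))))) + 2 * R * sin (pi - \<theta>)"
    using False assms by (intro chord_bound_acute) auto
  also have "cnj Q0 * cnj (\<i> * cis (- \<psi> - (pi - \<theta>))) = cnj (Q0 * cnj (\<i> * cis (\<psi> - \<theta>)))"
    by (simp flip: cnj_dir)
  finally show ?thesis
    by simp
qed

lemma phi_Gamma_R_bound: "valid_phase phs R x \<Longrightarrow> fst x = CR \<Longrightarrow> \<bar>phi_of x\<bar> \<le> ps"
  by (simp add: valid_phase_def abs_le_iff)

lemma chord_into_Gamma_R_bound:
  assumes step: "bstep phs R u v" and "bstep phs R v v'" "bstep phs R v' v''"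
    and Cr: "fst u = Cr" and CR: "fst v = CR" "fst v' = CR" "fst v'' = CR"
  shows "cmod (pos phs R u - pos phs R v) < 2/3 * sin (theta_of u) + 2/3 * (R * sin (theta_of v))"
proof -
  have bounce1: "cis (phi_of v') = cis (phi_of v + 2 * theta_of v)" "theta_of v' = theta_of v"
    using bstep_Gamma_R[OF R_pos assms(2) CR(1,2)] by auto
  have bounce2: "cis (phi_of v'') = cis (phi_of v' + 2 * theta_of v)"
    using bstep_Gamma_R[OF R_pos assms(3) CR(2,3)] bounce1(2) by auto
  have \<theta>: "0 < theta_of v" "theta_of v < pi"
    using bstep_valid(2)[OF step] by (auto simp: valid_phase_def)
  have \<phi>: "\<bar>phi_of v\<bar> \<le> ps" "\<bar>phi_of v'\<bar> \<le> ps" "\<bar>phi_of v''\<bar> \<le> ps"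
    using bstep_valid[OF assms(2)] bstep_valid[OF assms(3)] CR by (auto intro: phi_Gamma_R_bound)
  have orientation: "if theta_of v \<le> pi / 2 then phi_of v + 4 * theta_of v \<le> ps
      else - ps \<le> phi_of v - 4 * (pi - theta_of v)"
    using psi_star_le pi_gt_zero
    by (intro two_bounces_orientation[OF _ \<phi> \<theta> bounce1(1) bounce2]) linarith
  obtain t where "0 < t" and chord: "pos phs R v = pos phs R u + complex_of_real t * vel u"
    using step by (auto simp: bstep_def)
  have vel_u: "vel u = \<i> * cis (phi_of v - theta_of v)"
    by (rule bstep_incoming_vel[OF step])
  have "phs \<le> phi_of u" "phi_of u \<le> 2 * pi - phs"
    using bstep_valid(1)[OF step] Cr by (auto simp: valid_phase_def)
  then have "cmod (pos phs R u + complex_of_real c) \<le> R"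
    by (simp add: pos_Cr[OF Cr] Gamma_r_in_disc_R)
  then have "3 * t < 2 * (- Re (pos phs R u * cnj (vel u))) + 2 * R * sin (theta_of v)"
    unfolding vel_u
    using \<theta> \<phi>(1) orientation \<open>0 < t\<close> chord
    by (intro chord_bound) (auto simp: pos_Cr[OF Cr] pos_CR[OF CR(1)] vel_u)
  moreover have "- Re (pos phs R u * cnj (vel u)) = sin (theta_of u)"
    unfolding pos_Cr[OF Cr] vel_eq Re_cis_cnj_i_cis by simp
  moreover have "cmod (pos phs R u - pos phs R v) = t"
    using \<open>0 < t\<close> by (simp add: chord norm_mult)
  ultimately show ?thesis
    by simp
qed

lemma chord_out_of_Gamma_R_bound:
  assumes "bstep phs R w v'" "bstep phs R v' v" "bstep phs R v u" "non_corner phs R w"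
    and "fst w = CR" "fst v' = CR" "fst v = CR" "fst u = Cr"
  shows "cmod (pos phs R v - pos phs R u) < 2/3 * (R * sin (theta_of v)) + 2/3 * sin (theta_of u)"
proof -
  have "cmod (pos phs R (time_reverse u) - pos phs R (time_reverse v))
      < 2/3 * sin (theta_of (time_reverse u)) + 2/3 * (R * sin (theta_of (time_reverse v)))"
    using assms(5-8)
    by (intro chord_into_Gamma_R_bound[OF bstep_time_reverse[OF assms(3) bstep_valid(3)[OF assms(2)]]
        bstep_time_reverse[OF assms(2) bstep_valid(3)[OF assms(1)]] bstep_time_reverse[OF assms(1,4)]]) auto
  then show ?thesis
    by (simp add: norm_minus_commute)
qed

lemma Gamma_R_excursion_chord_bounds:
  assumes orbit: "\<And>k. xs (Suc k) = bmap phs R (xs k)"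
    and step: "\<And>k. k < n0 + n1 + 2 \<Longrightarrow> bstep phs R (xs k) (xs (Suc k))"
    and exit: "xs n0 \<in> Mr_out phs R" and return: "xs (Suc n0 + n1) \<in> MR_out phs R"
    and stay: "\<And>j. j < n1 \<Longrightarrow> xs (Suc n0 + j) \<notin> MR_out phs R" and "2 \<le> n1"
  shows "cmod (pos phs R (xs n0) - pos phs R (xs (Suc n0)))
      < 2/3 * sin (theta_of (xs n0)) + 2/3 * (R * sin (theta_of (xs (Suc n0))))"
    and "cmod (pos phs R (xs (Suc n0 + n1)) - pos phs R (xs (Suc (Suc n0 + n1))))
      < 2/3 * (R * sin (theta_of (xs (Suc n0)))) + 2/3 * sin (theta_of (xs (Suc (Suc n0 + n1))))"
proof -
  have Cr0: "fst (xs n0) = Cr" and CR1: "fst (xs (Suc n0)) = CR"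
    using exit orbit[of n0] by (auto simp: Mr_out_def Mr_def MR_def)
  have run_steps: "bstep phs R (xs (Suc n0 + j)) (xs (Suc n0 + Suc j))" if "j < n1" for j
    using step[of "Suc n0 + j"] that by simp
  have CR: "fst (xs (Suc n0 + j)) = CR" if "j \<le> n1" for j
    using run_on_Gamma_R[of xs, OF orbit run_steps CR1 stay that] .
  have Cr2: "fst (xs (Suc (Suc n0 + n1))) = Cr"
    using return orbit[of "Suc n0 + n1"] by (auto simp: MR_out_def Mr_def)
  obtain m where m: "n1 = Suc (Suc m)"
    using \<open>2 \<le> n1\<close> by (metis add_2_eq_Suc le_Suc_ex)
  show "cmod (pos phs R (xs n0) - pos phs R (xs (Suc n0)))
      < 2/3 * sin (theta_of (xs n0)) + 2/3 * (R * sin (theta_of (xs (Suc n0))))"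
    using m CR[of 0] CR[of 1] CR[of 2]
    by (intro chord_into_Gamma_R_bound[OF step step step Cr0]) (auto simp: numeral_2_eq_2)
  have "theta_of (xs (Suc n0 + n1)) = theta_of (xs (Suc n0))"
    using theta_constant_on_run[OF R_pos run_steps CR] by simp
  moreover have "cmod (pos phs R (xs (Suc n0 + n1)) - pos phs R (xs (Suc (Suc n0 + n1))))
      < 2/3 * (R * sin (theta_of (xs (Suc n0 + n1)))) + 2/3 * sin (theta_of (xs (Suc (Suc n0 + n1))))"
  proof (rule chord_out_of_Gamma_R_bound)
    show "bstep phs R (xs (Suc n0 + m)) (xs (Suc n0 + Suc m))"
      using run_steps[of m] m by simp
    show "bstep phs R (xs (Suc n0 + Suc m)) (xs (Suc n0 + n1))"
      using run_steps[of "Suc m"] m by simp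
    show "bstep phs R (xs (Suc n0 + n1)) (xs (Suc (Suc n0 + n1)))"
      by (rule step) simp
    show "non_corner phs R (xs (Suc n0 + m))"
      using bstep_valid(3)[OF step[of "n0 + m"]] m by simp
  qed (use m CR[of m] CR[of "Suc m"] CR[of n1] Cr2 in auto)
  ultimately show "cmod (pos phs R (xs (Suc n0 + n1)) - pos phs R (xs (Suc (Suc n0 + n1))))
      < 2/3 * (R * sin (theta_of (xs (Suc n0)))) + 2/3 * sin (theta_of (xs (Suc (Suc n0 + n1))))"
    by simp
qed

end

theorem mainTheorem10:
  fixes phs R :: real and x :: phase and n0 n1 :: nat
  defines "F \<equiv> bmap phs R"
  assumes "0 < phs" and "phs < pi / 2" and "R \<ge> 33.2"
    and "x \<in> Mr phs R"
    and "\<forall>k < n0 + n1 + 2. bstep phs R ((F ^^ k) x) ((F ^^ Suc k) x)"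
    and "(F ^^ n0) x \<in> Mr_out phs R" and "\<forall>k < n0. (F ^^ k) x \<notin> Mr_out phs R"
    and "(F ^^ (n0 + 1 + n1)) x \<in> MR_out phs R"
    and "\<forall>k < n1. (F ^^ (n0 + 1 + k)) x \<notin> MR_out phs R"
    and "n1 \<ge> 2"
  shows "let x0 = (F ^^ n0) x; x1 = (F ^^ (n0 + 1)) x; x2 = (F ^^ (n0 + n1 + 2)) x;
             d0 = sin (theta_of x0); d1 = R * sin (theta_of x1); d2 = sin (theta_of x2);
             tau0 = cmod (pos phs R x0 - pos phs R x1);
             tau1 = cmod (pos phs R ((F ^^ (n0 + 1 + n1)) x) - pos phs R x2)
         in tau0 < 2/3 * d0 + 2/3 * d1 \<and> tau1 < 2/3 * d1 + 2/3 * d2"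
proof -
  interpret billiard_table phs R
    using assms(2-4) by unfold_locales
  define xs where "xs k = (F ^^ k) x" for k
  have "xs (Suc k) = bmap phs R (xs k)" for k
    by (simp add: xs_def F_def)
  moreover have "bstep phs R (xs k) (xs (Suc k))" if "k < n0 + n1 + 2" for k
    using assms(6) that by (simp add: xs_def)
  moreover have "xs (Suc n0 + j) \<notin> MR_out phs R" if "j < n1" for j
    using assms(10) that by (simp add: xs_def)
  ultimately show ?thesis
    using Gamma_R_excursion_chord_bounds[of xs n0 n1] assms(7,9,11) by (simp add: xs_def Let_def)
qed

end
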